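(* Let $\mathfrak{A}$ be a unital $\mathrm{C}^*$-algebra and $\mathfrak{S}\subset\mathfrak{A}$ an operator system. Let $\pi:\mathfrak{A}\to B(\mathcal{H})$ be a unital $*$-representation and $\Pi:\mathfrak{A}\to B(\mathcal{H})$ a unital completely positive map with $\Pi|_{\mathfrak{S}}=\pi|_{\mathfrak{S}}$. Let $\psi$ be a state on $\mathfrak{A}$ admitting a characteristic sequence $(\Delta_n)_n$ with $\Delta_n\in\mathfrak{S}$ for all $n$. Then $\limsup_{n\to\infty}\|\Pi(a)\pi(\Delta_n)\|\le\psi(a^*a)^{1/2}$ for every $a\in\mathfrak{A}$. Furthermore, $\lim_{n\to\infty}\|\pi(\Delta_n)^*\Pi(a)\pi(\Delta_n)\|=0$ for every self-adjoint $a\in\mathfrak{A}$ with $\psi(a)=0$.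
   Context: An operator system is a unital self-adjoint subspace of $\mathfrak{A}$. A sequence $(\Delta_n)_n$ in $\mathfrak{A}$ is a characteristic sequence for a state $\psi$ if (a) $\|\Delta_n\|=1$ for all $n$, (b) $\lim_{n\to\infty}\psi(\Delta_n)=1$, and (c) $\limsup_{n\to\infty}\|\Delta_n^*a\Delta_n\|\le|\psi(a)|$ for every $a\in\mathfrak{A}$. *)

theory Defs
  imports "HOL-Analysis.Analysis"
begin

class cvec = real_vector +
  fixes scaleC :: "complex \<Rightarrow> 'a \<Rightarrow> 'a"  (infixr "*\<^sub>C" 75)
  assumes scaleC_add_right: "c *\<^sub>C (x + y) = c *\<^sub>C x + c *\<^sub>C y"
    and scaleC_add_left: "(c + d) *\<^sub>C x = c *\<^sub>C x + d *\<^sub>C x"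
    and scaleC_scaleC: "c *\<^sub>C (d *\<^sub>C x) = (c * d) *\<^sub>C x"
    and scaleC_one: "1 *\<^sub>C x = x"
    and scaleR_scaleC: "scaleR r x = complex_of_real r *\<^sub>C x"

class cnormed_vec = cvec + real_normed_vector +
  assumes norm_scaleC: "norm (c *\<^sub>C x) = cmod c * norm x"

class cstar_algebra = cnormed_vec + real_normed_algebra_1 + banach +
  fixes cstar :: "'a \<Rightarrow> 'a"
  assumes mult_scaleC_left: "(c *\<^sub>C x) * y = c *\<^sub>C (x * y)"
    and mult_scaleC_right: "x * (c *\<^sub>C y) = c *\<^sub>C (x * y)"
    and cstar_cstar: "cstar (cstar x) = x"
    and cstar_add: "cstar (x + y) = cstar x + cstar y"
    and cstar_scaleC: "cstar (c *\<^sub>C x) = cnj c *\<^sub>C cstar x"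
    and cstar_mult: "cstar (x * y) = cstar y * cstar x"
    and cstar_identity: "norm (cstar x * x) = (norm x)\<^sup>2"

text \<open>Complex Hilbert spaces (inner product conjugate-linear in the first argument).\<close>
class chilbert = cnormed_vec + complete_space +
  fixes cinner :: "'a \<Rightarrow> 'a \<Rightarrow> complex"
  assumes cinner_commute: "cinner x y = cnj (cinner y x)"
    and cinner_add_left: "cinner (x + y) z = cinner x z + cinner y z"
    and cinner_scaleC_left: "cinner (c *\<^sub>C x) y = cnj c * cinner x y"
    and cinner_self_real: "Im (cinner x x) = 0"
    and cinner_self_nonneg: "0 \<le> Re (cinner x x)"
    and cinner_self_zero: "cinner x x = 0 \<longleftrightarrow> x = 0"
    and norm_cinner: "norm x = sqrt (Re (cinner x x))"

definition clinear :: "('a::cvec \<Rightarrow> 'b::cvec) \<Rightarrow> bool" where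
  "clinear f \<longleftrightarrow> (\<forall>x y. f (x + y) = f x + f y) \<and> (\<forall>c x. f (c *\<^sub>C x) = c *\<^sub>C f x)"

definition bounded_clinear :: "('a::cnormed_vec \<Rightarrow> 'b::cnormed_vec) \<Rightarrow> bool" where
  "bounded_clinear f \<longleftrightarrow> clinear f \<and> (\<exists>K. \<forall>x. norm (f x) \<le> norm x * K)"

text \<open>Elements of B(H) are represented as bounded complex-linear maps; the
  operator norm is onorm; the adjoint is the Hilbert space adjoint.\<close>
definition hadj :: "('h::chilbert \<Rightarrow> 'h) \<Rightarrow> ('h \<Rightarrow> 'h)" where
  "hadj T = (THE S. \<forall>x y. cinner (T x) y = cinner x (S y))"

definition op_matrix_pos :: "nat \<Rightarrow> (nat \<Rightarrow> nat \<Rightarrow> ('h::chilbert \<Rightarrow> 'h)) \<Rightarrow> bool" where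
  "op_matrix_pos n T \<longleftrightarrow> (\<forall>\<xi> :: nat \<Rightarrow> 'h.
      Im (\<Sum>i<n. \<Sum>j<n. cinner (\<xi> i) (T i j (\<xi> j))) = 0 \<and>
      0 \<le> Re (\<Sum>i<n. \<Sum>j<n. cinner (\<xi> i) (T i j (\<xi> j))))"

definition cstar_matrix_pos :: "nat \<Rightarrow> (nat \<Rightarrow> nat \<Rightarrow> 'a::cstar_algebra) \<Rightarrow> bool" where
  "cstar_matrix_pos n X \<longleftrightarrow> (\<exists>Y :: nat \<Rightarrow> nat \<Rightarrow> 'a.
      \<forall>i<n. \<forall>j<n. X i j = (\<Sum>k<n. cstar (Y k i) * Y k j))"

definition clinear_op_map :: "('a::cstar_algebra \<Rightarrow> ('h::chilbert \<Rightarrow> 'h)) \<Rightarrow> bool" where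
  "clinear_op_map \<Phi> \<longleftrightarrow> (\<forall>a. bounded_clinear (\<Phi> a)) \<and>
     (\<forall>a b. \<Phi> (a + b) = (\<lambda>h. \<Phi> a h + \<Phi> b h)) \<and>
     (\<forall>c a. \<Phi> (c *\<^sub>C a) = (\<lambda>h. c *\<^sub>C \<Phi> a h))"

definition unital_star_rep :: "('a::cstar_algebra \<Rightarrow> ('h::chilbert \<Rightarrow> 'h)) \<Rightarrow> bool" where
  "unital_star_rep \<pi> \<longleftrightarrow> clinear_op_map \<pi> \<and> \<pi> 1 = id \<and>
     (\<forall>a b. \<pi> (a * b) = \<pi> a \<circ> \<pi> b) \<and> (\<forall>a. \<pi> (cstar a) = hadj (\<pi> a))"

definition completely_positive :: "('a::cstar_algebra \<Rightarrow> ('h::chilbert \<Rightarrow> 'h)) \<Rightarrow> bool" where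
  "completely_positive \<Phi> \<longleftrightarrow>
     (\<forall>n X. cstar_matrix_pos n X \<longrightarrow> op_matrix_pos n (\<lambda>i j. \<Phi> (X i j)))"

definition ucp :: "('a::cstar_algebra \<Rightarrow> ('h::chilbert \<Rightarrow> 'h)) \<Rightarrow> bool" where
  "ucp \<Phi> \<longleftrightarrow> clinear_op_map \<Phi> \<and> \<Phi> 1 = id \<and> completely_positive \<Phi>"

definition operator_system :: "'a::cstar_algebra set \<Rightarrow> bool" where
  "operator_system S \<longleftrightarrow> 0 \<in> S \<and> 1 \<in> S \<and>
     (\<forall>x\<in>S. \<forall>y\<in>S. x + y \<in> S) \<and> (\<forall>c. \<forall>x\<in>S. c *\<^sub>C x \<in> S) \<and>
     (\<forall>x\<in>S. cstar x \<in> S)"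

definition cstate :: "('a::cstar_algebra \<Rightarrow> complex) \<Rightarrow> bool" where
  "cstate \<psi> \<longleftrightarrow> (\<forall>x y. \<psi> (x + y) = \<psi> x + \<psi> y) \<and> (\<forall>c x. \<psi> (c *\<^sub>C x) = c * \<psi> x) \<and>
     (\<forall>a. Im (\<psi> (cstar a * a)) = 0 \<and> 0 \<le> Re (\<psi> (cstar a * a))) \<and> \<psi> 1 = 1"

definition characteristic_sequence :: "('a::cstar_algebra \<Rightarrow> complex) \<Rightarrow> (nat \<Rightarrow> 'a) \<Rightarrow> bool" where
  "characteristic_sequence \<psi> \<Delta> \<longleftrightarrow>
     (\<forall>n. norm (\<Delta> n) = 1) \<and>
     (\<lambda>n. \<psi> (\<Delta> n)) \<longlonglongrightarrow> 1 \<and>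
     (\<forall>a. limsup (\<lambda>n. ereal (norm (cstar (\<Delta> n) * a * \<Delta> n))) \<le> ereal (cmod (\<psi> a)))"

end

theory Submission
  imports Defs "HOL-Computational_Algebra.Formal_Power_Series"
begin

text \<open>Since \<open>\<Delta>\<^sub>n \<in> S\<close>, \<open>\<pi>(\<Delta>\<^sub>n) = \<Phi>(\<Delta>\<^sub>n)\<close>. For a ucp map the Schwarz defect
  \<open>\<langle>x, \<Phi>(b\<^sup>*b) x\<rangle> - \<parallel>\<Phi>(b) x\<parallel>\<^sup>2\<close> controls multiplicativity: \<open>\<Phi>(a) \<Phi>(b) x\<close> and \<open>\<Phi>(ab) x\<close> differ
  by at most \<open>\<parallel>a\<parallel>\<close> times its square root. Condition (c) applied to
  \<open>(\<Delta>\<^sub>m - \<psi>(\<Delta>\<^sub>m))\<^sup>*(\<Delta>\<^sub>m - \<psi>(\<Delta>\<^sub>m))\<close>, whose \<open>\<psi>\<close>-value is at most \<open>1 - |\<psi>(\<Delta>\<^sub>m)|\<^sup>2\<close>, shows that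
  for large \<open>m\<close> and then large \<open>n\<close> the operator \<open>\<pi>(\<Delta>\<^sub>m)\<close> acts on the range of \<open>\<pi>(\<Delta>\<^sub>n)\<close> almost
  as multiplication by \<open>\<psi>(\<Delta>\<^sub>m) \<approx> 1\<close>, so that there the defect of \<open>\<Delta>\<^sub>m\<close> is small. Hence
  \<open>\<Phi>(a) \<pi>(\<Delta>\<^sub>n) \<approx> \<Phi>(a\<Delta>\<^sub>m) \<pi>(\<Delta>\<^sub>n)\<close>, of norm at most \<open>\<parallel>a\<Delta>\<^sub>m\<parallel> = \<parallel>\<Delta>\<^sub>m\<^sup>* a\<^sup>*a \<Delta>\<^sub>m\<parallel>\<^sup>1\<^sup>/\<^sup>2\<close>, which
  is eventually close to \<open>\<psi>(a\<^sup>*a)\<^sup>1\<^sup>/\<^sup>2\<close>; likewise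
  \<open>\<pi>(\<Delta>\<^sub>n)\<^sup>* \<Phi>(a) \<pi>(\<Delta>\<^sub>n) \<approx> \<pi>(\<Delta>\<^sub>n)\<^sup>* \<Phi>(\<Delta>\<^sub>m\<^sup>* a \<Delta>\<^sub>m) \<pi>(\<Delta>\<^sub>n)\<close>, of norm at most about \<open>|\<psi>(a)|\<close>.\<close>

section \<open>Complex vector spaces and Hilbert spaces\<close>

lemma scaleC_zero_right [simp]: "c *\<^sub>C (0::'a::cvec) = 0"
  using scaleC_add_right[of c "0::'a" 0] by simp

lemma scaleC_zero_left [simp]: "0 *\<^sub>C (x::'a::cvec) = 0"
  using scaleC_add_left[of 0 0 x] by simp

lemma scaleC_minus_left: "(- c) *\<^sub>C (x::'a::cvec) = - (c *\<^sub>C x)"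
  using scaleC_add_left[of "- c" c x] by (simp add: eq_neg_iff_add_eq_0)

lemma scaleC_minus_right: "c *\<^sub>C (- x::'a::cvec) = - (c *\<^sub>C x)"
  using scaleC_add_right[of c "- x" x] by (simp add: eq_neg_iff_add_eq_0)

lemma scaleC_diff_right: "c *\<^sub>C (x - y::'a::cvec) = c *\<^sub>C x - c *\<^sub>C y"
  by (simp only: diff_conv_add_uminus scaleC_add_right scaleC_minus_right)

lemma scaleC_minus1: "(-1) *\<^sub>C (x::'a::cvec) = - x"
  by (simp add: scaleC_minus_left scaleC_one)

lemma cinner_add_right: "cinner x (y + z) = cinner x y + cinner (x::'a::chilbert) z"
  by (metis cinner_commute cinner_add_left complex_cnj_add)

lemma cinner_scaleC_right: "cinner x (c *\<^sub>C y) = c * cinner (x::'a::chilbert) y"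
  by (metis cinner_commute cinner_scaleC_left complex_cnj_cnj complex_cnj_mult)

lemma cinner_zero_left [simp]: "cinner 0 (x::'a::chilbert) = 0"
  using cinner_scaleC_left[of 0 0 x] by simp

lemma cinner_zero_right [simp]: "cinner x (0::'a::chilbert) = 0"
  using cinner_scaleC_right[of x 0 0] by simp

lemma cinner_minus_left: "cinner (- x) (y::'a::chilbert) = - cinner x y"
  using cinner_scaleC_left[of "-1" x y] by (simp add: scaleC_minus1)

lemma cinner_minus_right: "cinner x (- y::'a::chilbert) = - cinner x y"
  using cinner_scaleC_right[of x "-1" y] by (simp add: scaleC_minus1)

lemma cinner_diff_left: "cinner (x - y) (z::'a::chilbert) = cinner x z - cinner y z"
  by (simp only: diff_conv_add_uminus cinner_add_left cinner_minus_left)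

lemma cinner_diff_right: "cinner x (y - z::'a::chilbert) = cinner x y - cinner x z"
  by (simp only: diff_conv_add_uminus cinner_add_right cinner_minus_right)

lemma cinner_self: "cinner x (x::'a::chilbert) = complex_of_real ((norm x)\<^sup>2)"
  using norm_cinner[of x] cinner_self_nonneg[of x] cinner_self_real[of x]
  by (simp add: complex_eq_iff)

lemma Re_cinner_self: "Re (cinner x (x::'a::chilbert)) = (norm x)\<^sup>2"
  by (simp add: cinner_self)

lemma cmod_sq_le_of_quadratic_nonneg:
  fixes A C :: real and \<alpha> :: complex
  assumes q: "\<And>t::complex. 0 \<le> A + 2 * Re (t * \<alpha>) + (cmod t)\<^sup>2 * C"
  shows "(cmod \<alpha>)\<^sup>2 \<le> A * C"
proof (cases "\<alpha> = 0")
  case True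
  have "0 \<le> A" using q[of 0] by simp
  moreover have "0 \<le> C"
  proof (rule ccontr)
    assume "\<not> 0 \<le> C"
    define s where "s = sqrt ((\<bar>A\<bar> + 1) / (- C))"
    have "s\<^sup>2 * C = - (\<bar>A\<bar> + 1)"
      using \<open>\<not> 0 \<le> C\<close> by (simp add: s_def field_simps)
    then show False using q[of "complex_of_real s"] True by (simp add: power2_abs)
  qed
  ultimately show ?thesis using True by simp
next
  case False
  let ?a = "cmod \<alpha>"
  have a0: "?a > 0" using False by simp
  have real_line: "0 \<le> A - 2 * s * ?a + s\<^sup>2 * C" for s :: real
  proof -
    define t where "t = - complex_of_real s * cnj \<alpha> / complex_of_real ?a"
    have "t * \<alpha> = - complex_of_real s * (cnj \<alpha> * \<alpha>) / complex_of_real ?a"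
      unfolding t_def by (simp add: field_simps)
    also have "cnj \<alpha> * \<alpha> = complex_of_real (?a\<^sup>2)"
      by (simp add: mult.commute[of "cnj \<alpha>"] complex_mult_cnj cmod_power2)
    finally have "Re (t * \<alpha>) = - s * ?a" using a0 by (simp add: power2_eq_square)
    moreover have "cmod t = \<bar>s\<bar>" unfolding t_def using a0 by (simp add: norm_mult norm_divide)
    ultimately show ?thesis using q[of t] by (simp add: power2_abs)
  qed
  show ?thesis
  proof (cases "C > 0")
    case True
    show ?thesis using real_line[of "?a / C"] True by (simp add: power2_eq_square field_simps)
  next
    case False
    have "((A + 1) / (2 * ?a))\<^sup>2 * C \<le> 0" using False by (simp add: mult_nonneg_nonpos)
    moreover have "2 * ((A + 1) / (2 * ?a)) * ?a = A + 1" using a0 by simp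
    ultimately show ?thesis using real_line[of "(A + 1) / (2 * ?a)"] by linarith
  qed
qed

lemma cmod_cinner_le: "cmod (cinner x y) \<le> norm x * norm (y::'a::chilbert)"
proof -
  have "(cmod (cinner y x))\<^sup>2 \<le> (norm y)\<^sup>2 * (norm x)\<^sup>2"
  proof (rule cmod_sq_le_of_quadratic_nonneg)
    fix t :: complex
    have "cinner (y + t *\<^sub>C x) (y + t *\<^sub>C x) =
        cinner y y + (t * cinner y x + cnj (t * cinner y x)) + cnj t * t * cinner x x"
      by (simp add: cinner_add_left cinner_add_right cinner_scaleC_left cinner_scaleC_right
          cinner_commute[of x y] algebra_simps)
    moreover have "cnj t * t = complex_of_real ((cmod t)\<^sup>2)"
      by (simp add: mult.commute[of "cnj t"] complex_mult_cnj cmod_power2)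
    ultimately have "Re (cinner (y + t *\<^sub>C x) (y + t *\<^sub>C x)) =
        (norm y)\<^sup>2 + 2 * Re (t * cinner y x) + (cmod t)\<^sup>2 * (norm x)\<^sup>2"
      by (simp add: cinner_self)
    then show "0 \<le> (norm y)\<^sup>2 + 2 * Re (t * cinner y x) + (cmod t)\<^sup>2 * (norm x)\<^sup>2"
      using cinner_self_nonneg by metis
  qed
  moreover have "cmod (cinner y x) = cmod (cinner x y)" by (metis cinner_commute complex_mod_cnj)
  ultimately have "(cmod (cinner x y))\<^sup>2 \<le> (norm x * norm y)\<^sup>2"
    by (simp add: power_mult_distrib mult.commute)
  then show ?thesis by (rule power2_le_imp_le) simp
qed

lemma norm_le_of_cmod_cinner_le:
  fixes z :: "'h::chilbert"
  assumes "0 \<le> B" and "\<And>\<eta>. cmod (cinner \<eta> z) \<le> B * norm \<eta>"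
  shows "norm z \<le> B"
proof (cases "z = 0")
  case False
  have "norm z * norm z \<le> B * norm z"
    using assms(2)[of z] by (simp add: cinner_self power2_eq_square norm_mult)
  then show ?thesis using False by simp
qed (use assms in simp)

lemma le_sqrt_mult_of_sq_le:
  fixes u A B :: real
  assumes "u\<^sup>2 \<le> A * B\<^sup>2" and "0 \<le> B"
  shows "u \<le> sqrt A * B"
proof -
  have "u \<le> sqrt (u\<^sup>2)" by simp
  also have "\<dots> \<le> sqrt (A * B\<^sup>2)" using assms(1) by (rule real_sqrt_le_mono)
  finally show ?thesis using assms(2) by (simp add: real_sqrt_mult)
qed

lemma norm_le_diff_diff_add:
  fixes x y z :: "'a::real_normed_vector"
  shows "norm x \<le> norm (x - y) + norm (y - z) + norm z"
proof -
  have "norm (x - z) \<le> norm (x - y) + norm (y - z)"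
    by (rule norm_diff_triangle_le[where y = y]) simp_all
  then show ?thesis using norm_triangle_sub[of x z] by linarith
qed

section \<open>C*-algebras\<close>

lemma cstar_minus: "cstar (- x) = - cstar (x::'a::cstar_algebra)"
  using cstar_scaleC[of "-1" x] by (simp add: scaleC_minus1)

lemma cstar_diff: "cstar (x - y) = cstar x - cstar (y::'a::cstar_algebra)"
  by (simp only: diff_conv_add_uminus cstar_add cstar_minus)

lemma cstar_one [simp]: "cstar (1::'a::cstar_algebra) = 1"
  by (metis cstar_cstar cstar_mult mult.right_neutral)

lemma cstar_scaleR: "cstar (r *\<^sub>R x) = r *\<^sub>R cstar (x::'a::cstar_algebra)"
  by (simp add: scaleR_scaleC cstar_scaleC)

lemma norm_cstar [simp]: "norm (cstar (x::'a::cstar_algebra)) = norm x"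
proof -
  have le: "norm y \<le> norm (cstar y)" for y :: 'a
  proof (cases "y = 0")
    case False
    have "norm y * norm y \<le> norm (cstar y) * norm y"
      using cstar_identity[of y] norm_mult_ineq[of "cstar y" y] by (simp add: power2_eq_square)
    then show ?thesis using False by simp
  qed simp
  show ?thesis using le[of x] le[of "cstar x"] by (simp add: cstar_cstar)
qed

lemma cstar_power: "cstar (x ^ n) = (cstar (x::'a::cstar_algebra)) ^ n"
  by (induction n) (simp_all add: cstar_mult power_commutes)

lemma bounded_linear_cstar: "bounded_linear (cstar :: 'a::cstar_algebra \<Rightarrow> 'a)"
  by (rule bounded_linear_intro[where K=1]) (simp_all add: cstar_add cstar_scaleR)

lemma norm_mult_eq_sqrt_compression:
  "norm (x * y) = sqrt (norm (cstar y * (cstar x * x) * (y::'a::cstar_algebra)))"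
  using cstar_identity[of "x * y"] by (simp add: cstar_mult mult.assoc)

definition sqrt_coeff :: "nat \<Rightarrow> real" where
  "sqrt_coeff k = ((1/2::real) gchoose k) * (-1) ^ k"

lemma abs_sqrt_coeff_le: "\<bar>sqrt_coeff k\<bar> \<le> 1"
proof -
  have "\<bar>(1/2::real) gchoose k\<bar> \<le> 1"
  proof (induction k)
    case (Suc k)
    have "((1/2::real) gchoose (Suc k)) = (1/2 - of_nat k) * ((1/2) gchoose k) / of_nat (Suc k)"
      using gbinomial_mult_1[of "1/2::real" k] by (simp add: field_simps del: of_nat_Suc)
    then have "\<bar>(1/2::real) gchoose (Suc k)\<bar> = \<bar>1/2 - of_nat k\<bar> / of_nat (Suc k) * \<bar>(1/2) gchoose k\<bar>"
      by (simp add: abs_mult abs_divide)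
    also have "\<dots> \<le> 1 * 1"
      by (rule mult_mono) (use Suc in \<open>auto simp: field_simps\<close>)
    finally show ?case by simp
  qed simp
  then show ?thesis by (simp add: sqrt_coeff_def abs_mult)
qed

text \<open>The coefficients of the binomial series of \<open>(1 - x)\<^sup>1\<^sup>/\<^sup>2\<close>; their Cauchy square is
  \<open>1 - x\<close> by Vandermonde's identity.\<close>
lemma sqrt_coeff_convolution:
  "(\<Sum>i\<le>n. sqrt_coeff i * sqrt_coeff (n - i)) = (if n = 0 then 1 else if n = 1 then -1 else 0)"
proof -
  have "(\<Sum>i\<le>n. sqrt_coeff i * sqrt_coeff (n - i)) =
      (-1)^n * (\<Sum>i\<le>n. ((1/2::real) gchoose i) * ((1/2) gchoose (n - i)))"
    unfolding sum_distrib_left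
    by (rule sum.cong) (auto simp: sqrt_coeff_def power_add[symmetric])
  also have "\<dots> = (-1)^n * ((1/2 + 1/2::real) gchoose n)"
    by (simp only: atMost_atLeast0 gbinomial_Vandermonde)
  also have "(1/2 + 1/2::real) gchoose n = of_nat (1 choose n)"
    using binomial_gbinomial[of 1 n, where 'a=real] by simp
  finally show ?thesis
    by (cases "n \<le> 1") (auto simp: le_Suc_eq binomial_eq_0)
qed

lemma cstar_sqrt_one_minus:
  fixes h :: "'a::cstar_algebra"
  assumes "cstar h = h" and "norm h < 1"
  shows "\<exists>z. cstar z * z = 1 - h"
proof -
  define f where "f k = sqrt_coeff k *\<^sub>R h ^ k" for k
  have "norm (f k) \<le> norm h ^ k" for k
    using mult_mono[OF abs_sqrt_coeff_le norm_power_ineq[of h k]] by (simp add: f_def)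
  then have sn: "summable (\<lambda>k. norm (f k))"
    by (intro summable_comparison_test[OF _ summable_geometric[of "norm h"]]) (use assms in auto)
  then have sf: "summable f" by (rule summable_norm_cancel)
  define z where "z = suminf f"
  have "cstar z = (\<Sum>k. cstar (f k))"
    unfolding z_def by (rule bounded_linear.suminf[OF bounded_linear_cstar sf])
  also have "(\<lambda>k. cstar (f k)) = f"
    by (rule ext) (simp add: f_def cstar_scaleR cstar_power assms(1))
  finally have "cstar z = z" unfolding z_def .
  have "(\<lambda>k. \<Sum>i\<le>k. f i * f (k - i)) sums (z * z)"
    unfolding z_def by (rule Cauchy_product_sums[OF sn sn])
  moreover have "(\<lambda>k. \<Sum>i\<le>k. f i * f (k - i)) = (\<lambda>k. (\<Sum>i\<le>k. sqrt_coeff i * sqrt_coeff (k - i)) *\<^sub>R h ^ k)"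
    by (auto simp: f_def scaleR_sum_left power_add[symmetric] intro!: sum.cong)
  moreover have "(\<lambda>k. (\<Sum>i\<le>k. sqrt_coeff i * sqrt_coeff (k - i)) *\<^sub>R h ^ k) =
      (\<lambda>k. (if k = 0 then 1 else 0) + (if k = 1 then - h else 0))"
    by (rule ext) (simp add: sqrt_coeff_convolution)
  moreover have "(\<lambda>k. (if k = 0 then (1::'a) else 0) + (if k = 1 then - h else 0)) sums (1 + - h)"
    by (rule sums_add) (use sums_single[of 0 "\<lambda>_. 1::'a"] sums_single[of 1 "\<lambda>_. - h"] in simp_all)
  ultimately have "z * z = 1 - h" by (simp add: sums_unique2)
  then show ?thesis using \<open>cstar z = z\<close> by metis
qed

text \<open>For \<open>t > \<parallel>a\<parallel>\<close> the element \<open>t\<^sup>2 - a\<^sup>* a\<close> is of the form \<open>z\<^sup>* z\<close>.\<close>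
lemma le_norm_sq_of_nonneg_on_squares:
  fixes F :: "'a::cstar_algebra \<Rightarrow> real"
  assumes pos: "\<And>z. 0 \<le> F (cstar z * z)"
    and affine: "\<And>r x. F (1 - r *\<^sub>R x) = F 1 - r * F x"
  shows "F (cstar a * a) \<le> (norm a)\<^sup>2 * F 1"
proof (cases "a = 0")
  case True
  then show ?thesis using affine[of 1 1] by simp
next
  case False
  show ?thesis
  proof (rule field_le_mult_one_interval)
    fix t :: real assume t: "0 < t" "t < 1"
    define h where "h = (t / (norm a)\<^sup>2) *\<^sub>R (cstar a * a)"
    have "cstar h = h" by (simp add: h_def cstar_scaleR cstar_mult cstar_cstar)
    moreover have "norm h < 1" using t False by (simp add: h_def cstar_identity)
    ultimately obtain z where "cstar z * z = 1 - h" using cstar_sqrt_one_minus by blast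
    then have "0 \<le> F 1 - t / (norm a)\<^sup>2 * F (cstar a * a)"
      using pos[of z] affine by (simp add: h_def)
    then show "t * F (cstar a * a) \<le> (norm a)\<^sup>2 * F 1"
      using False by (simp add: field_simps)
  qed
qed

lemma left_inverse_scaled_one_minus:
  fixes h :: "'a::{banach, real_normed_algebra_1}"
  assumes "norm h < l"
  shows "\<exists>g. g * (l *\<^sub>R 1 - h) = 1"
proof -
  have l0: "l > 0" using assms norm_ge_zero[of h] by linarith
  define k where "k = (1/l) *\<^sub>R h"
  have "norm k < 1" using assms l0 by (simp add: k_def field_simps)
  then have "summable (\<lambda>n. norm (k ^ n))"
    by (intro summable_comparison_test[OF _ summable_geometric[of "norm k"]])
      (auto simp: norm_power_ineq)
  then have s: "summable (\<lambda>n. k ^ n)" by (rule summable_norm_cancel)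
  have "(\<lambda>n. k ^ n - k ^ Suc n) sums (k ^ 0 - 0)"
    by (rule telescope_sums'[OF LIMSEQ_power_zero]) fact
  moreover have "(\<lambda>n. k ^ n - k ^ Suc n) = (\<lambda>n. k ^ n * (1 - k))"
    by (simp add: algebra_simps power_commutes)
  ultimately have "suminf (\<lambda>n. k ^ n) * (1 - k) = 1"
    using suminf_mult2[OF s, of "1 - k"] by (simp add: sums_unique[symmetric])
  moreover have "l *\<^sub>R 1 - h = l *\<^sub>R (1 - k)" using l0 by (simp add: k_def scaleR_diff_right)
  ultimately have "((1/l) *\<^sub>R suminf (\<lambda>n. k ^ n)) * (l *\<^sub>R 1 - h) = 1"
    using l0 by simp
  then show ?thesis by blast
qed

lemma bounded_clinear_bounded_linear:
  "bounded_clinear f \<Longrightarrow> bounded_linear f"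
  unfolding bounded_clinear_def clinear_def
  by (auto intro!: bounded_linear_intro simp: scaleR_scaleC)

lemma bounded_clinear_scaleC: "bounded_clinear f \<Longrightarrow> f (c *\<^sub>C x) = c *\<^sub>C f x"
  unfolding bounded_clinear_def clinear_def by blast

lemma clinear_op_map_bounded_linear: "clinear_op_map \<Phi> \<Longrightarrow> bounded_linear (\<Phi> a)"
  unfolding clinear_op_map_def by (blast intro: bounded_clinear_bounded_linear)

lemma clinear_op_map_scaleC_right: "clinear_op_map \<Phi> \<Longrightarrow> \<Phi> a (c *\<^sub>C x) = c *\<^sub>C \<Phi> a x"
  unfolding clinear_op_map_def by (blast intro: bounded_clinear_scaleC)

lemma clinear_op_map_add: "clinear_op_map \<Phi> \<Longrightarrow> \<Phi> (a + b) x = \<Phi> a x + \<Phi> b x"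
  unfolding clinear_op_map_def by simp

lemma clinear_op_map_scaleC: "clinear_op_map \<Phi> \<Longrightarrow> \<Phi> (c *\<^sub>C a) x = c *\<^sub>C \<Phi> a x"
  unfolding clinear_op_map_def by simp

lemma clinear_op_map_diff: "clinear_op_map \<Phi> \<Longrightarrow> \<Phi> (a - b) x = \<Phi> a x - \<Phi> b x"
  using clinear_op_map_add[of \<Phi> a "(-1) *\<^sub>C b"] clinear_op_map_scaleC[of \<Phi> "-1" b]
  by (simp add: scaleC_minus1)

lemma clinear_op_map_scaleR: "clinear_op_map \<Phi> \<Longrightarrow> \<Phi> (r *\<^sub>R a) x = r *\<^sub>R \<Phi> a x"
  by (simp add: scaleR_scaleC clinear_op_map_scaleC)

lemmas clinear_op_map_simps =
  linear_add[OF bounded_linear.linear[OF clinear_op_map_bounded_linear]]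
  linear_diff[OF bounded_linear.linear[OF clinear_op_map_bounded_linear]]
  linear_neg[OF bounded_linear.linear[OF clinear_op_map_bounded_linear]]
  linear_0[OF bounded_linear.linear[OF clinear_op_map_bounded_linear]]
  clinear_op_map_scaleC_right clinear_op_map_add clinear_op_map_scaleC
  clinear_op_map_diff clinear_op_map_scaleR

section \<open>Unital completely positive maps\<close>

lemma cstar_matrix_pos_rank_one:
  fixes r :: "nat \<Rightarrow> 'a::cstar_algebra"
  assumes "0 < n"
  shows "cstar_matrix_pos n (\<lambda>i j. cstar (r i) * r j)"
  unfolding cstar_matrix_pos_def
proof (intro exI allI impI)
  fix i j
  have "(\<Sum>k<n. cstar (if k = 0 then r i else 0) * (if k = 0 then r j else 0)) =
        (\<Sum>k<n. if k = 0 then cstar (r i) * r j else 0)"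
    by (rule sum.cong) auto
  then show "cstar (r i) * r j = (\<Sum>k<n. cstar (if k = 0 then r i else 0) * (if k = 0 then r j else 0))"
    using assms by simp
qed

definition schwarz_defect :: "('a::cstar_algebra \<Rightarrow> 'h::chilbert \<Rightarrow> 'h) \<Rightarrow> 'a \<Rightarrow> 'h \<Rightarrow> real" where
  "schwarz_defect \<Phi> a x = Re (cinner x (\<Phi> (cstar a * a) x)) - (norm (\<Phi> a x))\<^sup>2"

context
  fixes \<Phi> :: "'a::cstar_algebra \<Rightarrow> ('h::chilbert \<Rightarrow> 'h)"
  assumes ucp: "ucp \<Phi>"
begin

lemma ucp_clinear_op_map: "clinear_op_map \<Phi>"
  using ucp unfolding ucp_def by blast

lemma ucp_one: "\<Phi> 1 x = x"
  using ucp unfolding ucp_def by simp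

lemmas ucp_simps = clinear_op_map_simps[OF ucp_clinear_op_map] ucp_one

lemma ucp_rank_one_nonneg:
  fixes \<xi> :: "nat \<Rightarrow> 'h" and r :: "nat \<Rightarrow> 'a"
  assumes "0 < n"
  shows "Im (\<Sum>i<n. \<Sum>j<n. cinner (\<xi> i) (\<Phi> (cstar (r i) * r j) (\<xi> j))) = 0 \<and>
         0 \<le> Re (\<Sum>i<n. \<Sum>j<n. cinner (\<xi> i) (\<Phi> (cstar (r i) * r j) (\<xi> j)))"
  using ucp cstar_matrix_pos_rank_one[OF assms, of r]
  unfolding ucp_def completely_positive_def op_matrix_pos_def by blast

lemma ucp_nonneg: "0 \<le> Re (cinner x (\<Phi> (cstar z * z) x))"
  using ucp_rank_one_nonneg[of 1 "\<lambda>_. x" "\<lambda>_. z"] by simp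

text \<open>Hermitian-ness of \<open>\<Phi>\<close>: positivity on the rank-one matrix of \<open>(1, a)\<close>, tested at
  \<open>(t y, x)\<close> for \<open>t = 0, 1, \<i>\<close>.\<close>
lemma ucp_adjoint: "cinner (\<Phi> a x) y = cinner x (\<Phi> (cstar a) y)"
proof -
  define r where "r i = (if i = 0 then 1 else a)" for i :: nat
  define \<alpha> where "\<alpha> = cinner y (\<Phi> a x)"
  define \<gamma> where "\<gamma> = cinner x (\<Phi> (cstar a) y)"
  define \<beta> where "\<beta> = cinner x (\<Phi> (cstar a * a) x)"
  have key: "Im (cnj t * t * cinner y y + cnj t * \<alpha> + t * \<gamma> + \<beta>) = 0" for t
  proof -
    define \<xi> where "\<xi> i = (if i = 0 then t *\<^sub>C y else x)" for i :: nat
    have "(\<Sum>i<2. \<Sum>j<2. cinner (\<xi> i) (\<Phi> (cstar (r i) * r j) (\<xi> j))) =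
        cnj t * t * cinner y y + cnj t * \<alpha> + t * \<gamma> + \<beta>"
      by (simp add: numeral_2_eq_2 \<xi>_def r_def \<alpha>_def \<beta>_def \<gamma>_def cinner_scaleC_left
          cinner_scaleC_right ucp_simps algebra_simps)
    then show ?thesis using ucp_rank_one_nonneg[of 2 \<xi> r] by simp
  qed
  have "Im \<beta> = 0" "Im (cinner y y + \<alpha> + \<gamma> + \<beta>) = 0"
    "Im (cinner y y - \<i> * \<alpha> + \<i> * \<gamma> + \<beta>) = 0"
    using key[of 0] key[of 1] key[of \<i>] by simp_all
  then have "\<gamma> = cnj \<alpha>" using cinner_self_real[of y] by (simp add: complex_eq_iff)
  then show ?thesis unfolding \<alpha>_def \<gamma>_def by (metis cinner_commute)
qed

text \<open>Positivity of \<open>\<Phi>\<close> on the rank-one matrix of \<open>(1, a, b)\<close>, tested at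
  \<open>(-(\<Phi>(a) x + \<Phi>(b) y), x, y)\<close>.\<close>
lemma schwarz_defect_sum_nonneg:
  "0 \<le> schwarz_defect \<Phi> a x + schwarz_defect \<Phi> b y
        + 2 * Re (cinner x (\<Phi> (cstar a * b) y) - cinner (\<Phi> a x) (\<Phi> b y))"
proof -
  define r where "r i = (if i = 0 then 1 else if i = 1 then a else b)" for i :: nat
  define A where "A = \<Phi> a x"
  define B where "B = \<Phi> b y"
  define s where "s = A + B"
  define \<xi> where "\<xi> i = (if i = 0 then - s else if i = 1 then x else y)" for i :: nat
  define T where "T = cinner x (\<Phi> (cstar a * b) y)"
  have "(\<Sum>i<3. \<Sum>j<3. cinner (\<xi> i) (\<Phi> (cstar (r i) * r j) (\<xi> j))) =
     (cinner (- s) (\<Phi> 1 (- s)) + cinner (- s) A + cinner (- s) B) +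
     (cinner x (\<Phi> (cstar a) (- s)) + cinner x (\<Phi> (cstar a * a) x) + T) +
     (cinner y (\<Phi> (cstar b) (- s)) + cinner y (\<Phi> (cstar b * a) x) + cinner y (\<Phi> (cstar b * b) y))"
    by (simp add: numeral_3_eq_3 r_def \<xi>_def A_def B_def T_def)
  also have "cinner x (\<Phi> (cstar a) (- s)) = cinner A (- s)"
    by (simp add: A_def ucp_adjoint)
  also have "cinner y (\<Phi> (cstar b) (- s)) = cinner B (- s)"
    by (simp add: B_def ucp_adjoint)
  also have "cinner y (\<Phi> (cstar b * a) x) = cnj T"
    by (metis T_def ucp_adjoint cinner_commute cstar_cstar cstar_mult)
  also have "cinner (- s) (\<Phi> 1 (- s)) = cinner s s"
    by (simp add: ucp_one cinner_minus_left cinner_minus_right)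
  also have "cinner s s = cinner A A + cinner B B + (cinner A B + cnj (cinner A B))"
    by (simp add: s_def cinner_add_left cinner_add_right cinner_commute[of B A])
  finally have "Re (\<Sum>i<3. \<Sum>j<3. cinner (\<xi> i) (\<Phi> (cstar (r i) * r j) (\<xi> j))) =
      schwarz_defect \<Phi> a x + schwarz_defect \<Phi> b y + 2 * Re (T - cinner A B)"
    by (simp add: schwarz_defect_def Re_cinner_self s_def A_def[symmetric] B_def[symmetric]
        cinner_add_left cinner_add_right cinner_diff_left cinner_diff_right cinner_minus_left
        cinner_minus_right cinner_commute[of B A])
  then show ?thesis using ucp_rank_one_nonneg[of 3 \<xi> r] by (simp add: T_def A_def B_def)
qed

lemma schwarz_defect_scaleC: "schwarz_defect \<Phi> a (c *\<^sub>C x) = (cmod c)\<^sup>2 * schwarz_defect \<Phi> a x"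
proof -
  have c: "cnj c * c = complex_of_real ((cmod c)\<^sup>2)"
    by (simp add: mult.commute[of "cnj c"] complex_mult_cnj cmod_power2)
  have "cinner (c *\<^sub>C x) (\<Phi> (cstar a * a) (c *\<^sub>C x)) = (cnj c * c) * cinner x (\<Phi> (cstar a * a) x)"
    by (simp add: ucp_simps cinner_scaleC_left cinner_scaleC_right)
  then have "Re (cinner (c *\<^sub>C x) (\<Phi> (cstar a * a) (c *\<^sub>C x))) =
      (cmod c)\<^sup>2 * Re (cinner x (\<Phi> (cstar a * a) x))"
    unfolding c by simp
  then show ?thesis
    by (simp add: schwarz_defect_def ucp_simps norm_scaleC power_mult_distrib algebra_simps)
qed

lemma schwarz_defect_nonneg: "0 \<le> schwarz_defect \<Phi> a x"
  using schwarz_defect_sum_nonneg[of a x 0 0] by (simp add: schwarz_defect_def ucp_simps)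

lemma schwarz_defect_cauchy_schwarz:
  "(cmod (cinner x (\<Phi> (cstar a * b) y) - cinner (\<Phi> a x) (\<Phi> b y)))\<^sup>2
     \<le> schwarz_defect \<Phi> a x * schwarz_defect \<Phi> b y"
proof -
  define \<beta> where "\<beta> = cinner x (\<Phi> (cstar a * b) y) - cinner (\<Phi> a x) (\<Phi> b y)"
  have "(cmod \<beta>)\<^sup>2 \<le> schwarz_defect \<Phi> b y * schwarz_defect \<Phi> a x"
  proof (rule cmod_sq_le_of_quadratic_nonneg)
    fix t :: complex
    have "cinner (cnj t *\<^sub>C x) (\<Phi> (cstar a * b) y) - cinner (\<Phi> a (cnj t *\<^sub>C x)) (\<Phi> b y) = t * \<beta>"
      by (simp add: \<beta>_def ucp_simps cinner_scaleC_left algebra_simps)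
    then show "0 \<le> schwarz_defect \<Phi> b y + 2 * Re (t * \<beta>) + (cmod t)\<^sup>2 * schwarz_defect \<Phi> a x"
      using schwarz_defect_sum_nonneg[of a "cnj t *\<^sub>C x" b y] by (simp add: schwarz_defect_scaleC)
  qed
  then show ?thesis by (simp add: \<beta>_def mult.commute)
qed

lemma ucp_cinner_le: "Re (cinner x (\<Phi> (cstar a * a) x)) \<le> (norm a)\<^sup>2 * (norm x)\<^sup>2"
  using le_norm_sq_of_nonneg_on_squares[of "\<lambda>u. Re (cinner x (\<Phi> u x))"]
  by (simp add: ucp_nonneg ucp_simps cinner_diff_right scaleR_scaleC cinner_scaleC_right
      Re_cinner_self)

lemma ucp_norm_le: "norm (\<Phi> a x) \<le> norm a * norm x"
proof (rule power2_le_imp_le)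
  show "(norm (\<Phi> a x))\<^sup>2 \<le> (norm a * norm x)\<^sup>2"
    using schwarz_defect_nonneg[of a x] ucp_cinner_le[of x a]
    by (simp add: schwarz_defect_def power_mult_distrib)
qed simp

lemma schwarz_defect_le: "schwarz_defect \<Phi> a x \<le> (norm a * norm x)\<^sup>2"
  using ucp_cinner_le[of x a] zero_le_power2[of "norm (\<Phi> a x)"]
  unfolding schwarz_defect_def power_mult_distrib by linarith

lemma ucp_mult_defect:
  "norm (\<Phi> a (\<Phi> b x) - \<Phi> (a * b) x) \<le> norm a * sqrt (schwarz_defect \<Phi> b x)"
proof (rule norm_le_of_cmod_cinner_le)
  fix \<eta>
  have "(cmod (cinner \<eta> (\<Phi> (a * b) x) - cinner (\<Phi> (cstar a) \<eta>) (\<Phi> b x)))\<^sup>2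
      \<le> schwarz_defect \<Phi> (cstar a) \<eta> * schwarz_defect \<Phi> b x"
    using schwarz_defect_cauchy_schwarz[of \<eta> "cstar a" b x] by (simp add: cstar_cstar)
  also have "\<dots> \<le> schwarz_defect \<Phi> b x * (norm a * norm \<eta>)\<^sup>2"
    using schwarz_defect_le[of "cstar a" \<eta>] schwarz_defect_nonneg[of b x]
    by (simp add: mult.commute mult_left_mono)
  finally have "cmod (cinner \<eta> (\<Phi> (a * b) x) - cinner (\<Phi> (cstar a) \<eta>) (\<Phi> b x))
      \<le> sqrt (schwarz_defect \<Phi> b x) * (norm a * norm \<eta>)"
    by (rule le_sqrt_mult_of_sq_le) simp
  moreover have "cinner (\<Phi> (cstar a) \<eta>) (\<Phi> b x) = cinner \<eta> (\<Phi> a (\<Phi> b x))"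
    by (simp add: ucp_adjoint cstar_cstar)
  ultimately show "cmod (cinner \<eta> (\<Phi> a (\<Phi> b x) - \<Phi> (a * b) x))
      \<le> norm a * sqrt (schwarz_defect \<Phi> b x) * norm \<eta>"
    by (simp add: cinner_diff_right norm_minus_commute algebra_simps)
qed (simp add: schwarz_defect_nonneg)

lemma ucp_compression_defect:
  "cmod (cinner (\<Phi> b y) (\<Phi> a (\<Phi> b x)) - cinner y (\<Phi> (cstar b * a * b) x))
     \<le> norm a * norm b * (norm y * sqrt (schwarz_defect \<Phi> b x) + norm x * sqrt (schwarz_defect \<Phi> b y))"
proof -
  have "cmod (cinner (\<Phi> b y) (\<Phi> a (\<Phi> b x) - \<Phi> (a * b) x))
      \<le> norm (\<Phi> b y) * norm (\<Phi> a (\<Phi> b x) - \<Phi> (a * b) x)"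
    by (rule cmod_cinner_le)
  also have "\<dots> \<le> norm (\<Phi> b y) * (norm a * sqrt (schwarz_defect \<Phi> b x))"
    by (rule mult_left_mono[OF ucp_mult_defect]) simp
  also have "\<dots> \<le> (norm b * norm y) * (norm a * sqrt (schwarz_defect \<Phi> b x))"
    by (rule mult_right_mono[OF ucp_norm_le]) (simp add: schwarz_defect_nonneg)
  finally have first: "cmod (cinner (\<Phi> b y) (\<Phi> a (\<Phi> b x) - \<Phi> (a * b) x))
      \<le> norm a * norm b * (norm y * sqrt (schwarz_defect \<Phi> b x))"
    by (simp add: algebra_simps)
  have "(cmod (cinner y (\<Phi> (cstar b * (a * b)) x) - cinner (\<Phi> b y) (\<Phi> (a * b) x)))\<^sup>2
      \<le> schwarz_defect \<Phi> b y * schwarz_defect \<Phi> (a * b) x"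
    by (rule schwarz_defect_cauchy_schwarz)
  also have "\<dots> \<le> schwarz_defect \<Phi> b y * (norm a * norm b * norm x)\<^sup>2"
  proof (rule mult_left_mono[OF _ schwarz_defect_nonneg])
    have "norm (a * b) * norm x \<le> norm a * norm b * norm x"
      by (simp add: mult_right_mono norm_mult_ineq)
    then have "(norm (a * b) * norm x)\<^sup>2 \<le> (norm a * norm b * norm x)\<^sup>2"
      by (rule power_mono) simp
    with schwarz_defect_le[of "a * b" x]
    show "schwarz_defect \<Phi> (a * b) x \<le> (norm a * norm b * norm x)\<^sup>2" by (rule order.trans)
  qed
  finally have "cmod (cinner y (\<Phi> (cstar b * (a * b)) x) - cinner (\<Phi> b y) (\<Phi> (a * b) x))
      \<le> sqrt (schwarz_defect \<Phi> b y) * (norm a * norm b * norm x)"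
    by (rule le_sqrt_mult_of_sq_le) simp
  then have second: "cmod (cinner y (\<Phi> (cstar b * (a * b)) x) - cinner (\<Phi> b y) (\<Phi> (a * b) x))
      \<le> norm a * norm b * (norm x * sqrt (schwarz_defect \<Phi> b y))"
    by (simp add: algebra_simps)
  have "cinner (\<Phi> b y) (\<Phi> a (\<Phi> b x)) - cinner y (\<Phi> (cstar b * a * b) x) =
      cinner (\<Phi> b y) (\<Phi> a (\<Phi> b x) - \<Phi> (a * b) x)
      - (cinner y (\<Phi> (cstar b * (a * b)) x) - cinner (\<Phi> b y) (\<Phi> (a * b) x))"
    by (simp add: cinner_diff_right mult.assoc)
  then have "cmod (cinner (\<Phi> b y) (\<Phi> a (\<Phi> b x)) - cinner y (\<Phi> (cstar b * a * b) x))
      \<le> cmod (cinner (\<Phi> b y) (\<Phi> a (\<Phi> b x) - \<Phi> (a * b) x))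
        + cmod (cinner y (\<Phi> (cstar b * (a * b)) x) - cinner (\<Phi> b y) (\<Phi> (a * b) x))"
    by (simp only: norm_triangle_ineq4)
  then show ?thesis using first second by (simp add: distrib_left)
qed

end

section \<open>States\<close>

context
  fixes \<psi> :: "'a::cstar_algebra \<Rightarrow> complex"
  assumes state: "cstate \<psi>"
begin

lemma cstate_add: "\<psi> (a + b) = \<psi> a + \<psi> b"
  and cstate_scaleC: "\<psi> (c *\<^sub>C a) = c * \<psi> a"
  and cstate_one: "\<psi> 1 = 1"
  and cstate_nonneg: "Im (\<psi> (cstar a * a)) = 0" "0 \<le> Re (\<psi> (cstar a * a))"
  using state unfolding cstate_def by blast+

lemma cstate_diff: "\<psi> (a - b) = \<psi> a - \<psi> b"
  using cstate_add[of a "(-1) *\<^sub>C b"] cstate_scaleC[of "-1" b] by (simp add: scaleC_minus1)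

lemma cstate_cstar: "\<psi> (cstar x) = cnj (\<psi> x)"
proof -
  have key: "Im (1 + c * \<psi> x + cnj c * \<psi> (cstar x) + (cnj c * c) * \<psi> (cstar x * x)) = 0" for c
  proof -
    have "cstar (1 + c *\<^sub>C x) * (1 + c *\<^sub>C x) =
        1 + c *\<^sub>C x + cnj c *\<^sub>C cstar x + (cnj c * c) *\<^sub>C (cstar x * x)"
      by (simp add: cstar_add cstar_scaleC algebra_simps mult_scaleC_left mult_scaleC_right
          scaleC_scaleC scaleC_add_right)
    then show ?thesis using cstate_nonneg(1)[of "1 + c *\<^sub>C x"] by (simp add: cstate_add cstate_scaleC cstate_one)
  qed
  from key[of 1] key[of \<i>] cstate_nonneg(1)[of x] show ?thesis by (simp add: complex_eq_iff)
qed

lemma cstate_variance: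
  "\<psi> (cstar (x - \<psi> x *\<^sub>C 1) * (x - \<psi> x *\<^sub>C 1)) = \<psi> (cstar x * x) - complex_of_real ((cmod (\<psi> x))\<^sup>2)"
proof -
  define c where "c = \<psi> x"
  have "cstar (x - c *\<^sub>C 1) * (x - c *\<^sub>C 1) = cstar x * x - c *\<^sub>C cstar x - cnj c *\<^sub>C x + (cnj c * c) *\<^sub>C 1"
    by (simp add: cstar_diff cstar_scaleC algebra_simps mult_scaleC_left mult_scaleC_right scaleC_scaleC
        scaleC_diff_right)
  then have "\<psi> (cstar (x - c *\<^sub>C 1) * (x - c *\<^sub>C 1)) = \<psi> (cstar x * x) - cnj c * c"
    by (simp add: cstate_add cstate_diff cstate_scaleC cstate_one cstate_cstar c_def)
  then show ?thesis by (simp add: c_def complex_mult_cnj cmod_power2 mult.commute[of "cnj _"])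
qed

lemma cstate_le_norm_sq: "Re (\<psi> (cstar a * a)) \<le> (norm a)\<^sup>2"
  using le_norm_sq_of_nonneg_on_squares[of "\<lambda>u. Re (\<psi> u)" a]
  by (simp add: cstate_nonneg cstate_diff cstate_one scaleR_scaleC cstate_scaleC)

end

section \<open>Representations\<close>

lemma exists_unit_less_norm_of_less_onorm:
  assumes f: "bounded_linear f" and "0 \<le> e" and "e < onorm f"
  shows "\<exists>x. norm x = 1 \<and> e < norm (f x)"
proof -
  have "bdd_above (range (\<lambda>x. norm (f x) / norm x))"
    by (rule bdd_aboveI2) (rule le_onorm[OF f])
  then obtain x where x: "e < norm (f x) / norm x"
    using \<open>e < onorm f\<close> unfolding onorm_def by (auto simp: less_cSUP_iff)
  then have "x \<noteq> 0" using \<open>0 \<le> e\<close> by auto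
  then show ?thesis
    using x by (intro exI[of _ "(1 / norm x) *\<^sub>R x"])
      (simp add: linear_scale[OF bounded_linear.linear[OF f]])
qed

context
  fixes R R' :: "'h::chilbert \<Rightarrow> 'h"
  assumes R: "bounded_linear R"
    and adj: "\<And>x y. cinner (R' x) y = cinner x (R y)"
begin

lemma norm_adjoint_mult_le: "norm (R' (R x)) \<le> onorm R * norm (R x)"
proof (cases "R' (R x) = 0")
  case False
  define T where "T = R' (R x)"
  have "norm T * norm T = Re (cinner (R x) (R T))"
    by (simp add: T_def adj[symmetric] Re_cinner_self power2_eq_square)
  also have "\<dots> \<le> norm (R x) * norm (R T)"
    using cmod_cinner_le complex_Re_le_cmod order.trans by blast
  also have "\<dots> \<le> norm (R x) * (onorm R * norm T)"
    by (rule mult_left_mono[OF onorm[OF R]]) simp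
  finally show ?thesis using False by (simp add: T_def algebra_simps)
qed (simp add: onorm_pos_le[OF R])

lemma norm_scaleR_minus_adjoint_mult_sq:
  assumes "norm x = 1"
  shows "(norm (N *\<^sub>R x - R' (R x)))\<^sup>2 = N\<^sup>2 - 2 * N * (norm (R x))\<^sup>2 + (norm (R' (R x)))\<^sup>2"
proof -
  have "cinner x (R' (R x)) = cnj (cinner (R x) (R x))" by (metis adj cinner_commute)
  then have RR: "cinner x (R' (R x)) = complex_of_real ((norm (R x))\<^sup>2)"
    by (simp add: cinner_self)
  have "cinner (N *\<^sub>R x - R' (R x)) (N *\<^sub>R x - R' (R x)) =
      N * N * cinner x x - N * cinner x (R' (R x)) - N * cnj (cinner x (R' (R x)))
      + cinner (R' (R x)) (R' (R x))"
    by (simp add: cinner_diff_left cinner_diff_right scaleR_scaleC cinner_scaleC_left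
        cinner_scaleC_right cinner_commute[of "R' (R x)" x] algebra_simps)
  then have "Re (cinner (N *\<^sub>R x - R' (R x)) (N *\<^sub>R x - R' (R x))) =
      N\<^sup>2 - 2 * N * (norm (R x))\<^sup>2 + (norm (R' (R x)))\<^sup>2"
    using assms by (simp add: RR cinner_self power2_eq_square)
  then show ?thesis by (simp only: Re_cinner_self)
qed

text \<open>If \<open>N = \<parallel>R\<parallel>\<^sup>2 > c\<close>, unit vectors \<open>x\<close> almost attaining \<open>\<parallel>R x\<parallel>\<^sup>2 = N\<close> are approximate
  eigenvectors of \<open>R' R\<close> for the eigenvalue \<open>N\<close>, so \<open>N - R' R\<close> is not bounded below.\<close>
lemma onorm_sq_le_of_bounded_below:
  assumes "0 \<le> c"
    and below: "\<And>N. c < N \<Longrightarrow> \<exists>K. \<forall>x. norm x \<le> K * norm (N *\<^sub>R x - R' (R x))"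
  shows "(onorm R)\<^sup>2 \<le> c"
proof (rule ccontr)
  define N where "N = (onorm R)\<^sup>2"
  assume "\<not> ?thesis"
  then have "c < N" by (simp add: N_def)
  then have N0: "0 < N" using \<open>0 \<le> c\<close> by linarith
  obtain K where K: "\<And>x. norm x \<le> K * norm (N *\<^sub>R x - R' (R x))" using below[OF \<open>c < N\<close>] by blast
  define L where "L = max K 1"
  have L: "norm x \<le> L * norm (N *\<^sub>R x - R' (R x))" for x
    using K[of x] mult_right_mono[OF max.cobounded1[of K 1] norm_ge_zero,
        of "N *\<^sub>R x - R' (R x)"]
    unfolding L_def by linarith
  define \<delta> where "\<delta> = 1 / (2 * L\<^sup>2 * N)"
  have "0 < \<delta>" using N0 by (simp add: \<delta>_def L_def)
  have "max 0 (N - \<delta>) < (onorm R)\<^sup>2"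
    using N0 \<open>0 < \<delta>\<close> unfolding N_def[symmetric] by simp
  then have "sqrt (max 0 (N - \<delta>)) < onorm R"
    by (rule real_less_lsqrt[OF onorm_pos_le[OF R]])
  then obtain x where x: "norm x = 1" "sqrt (max 0 (N - \<delta>)) < norm (R x)"
    using exists_unit_less_norm_of_less_onorm[OF R real_sqrt_ge_zero[OF max.cobounded1]] by blast
  have "(sqrt (max 0 (N - \<delta>)))\<^sup>2 < (norm (R x))\<^sup>2"
    by (rule power_strict_mono[OF x(2)]) simp_all
  then have "N - \<delta> < (norm (R x))\<^sup>2" by simp
  have "(norm (R' (R x)))\<^sup>2 \<le> N * (norm (R x))\<^sup>2"
    using power_mono[OF norm_adjoint_mult_le[of x] norm_ge_zero, of 2]
    by (simp add: N_def power_mult_distrib)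
  then have "(norm (N *\<^sub>R x - R' (R x)))\<^sup>2 \<le> N\<^sup>2 - 2 * N * (norm (R x))\<^sup>2 + N * (norm (R x))\<^sup>2"
    by (simp add: norm_scaleR_minus_adjoint_mult_sq[OF x(1)])
  also have "\<dots> < N * \<delta>"
    using mult_strict_left_mono[OF \<open>N - \<delta> < (norm (R x))\<^sup>2\<close> N0]
    by (simp add: power2_eq_square algebra_simps)
  finally have small: "(norm (N *\<^sub>R x - R' (R x)))\<^sup>2 < N * \<delta>" .
  have "1 \<le> (L * norm (N *\<^sub>R x - R' (R x)))\<^sup>2"
    using L[of x] x(1) by (simp add: one_le_power)
  also have "\<dots> \<le> L\<^sup>2 * (N * \<delta>)"
    using small by (simp add: power_mult_distrib mult_left_mono)
  also have "\<dots> = 1 / 2" using N0 by (simp add: \<delta>_def L_def field_simps)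
  finally show False by simp
qed

end

text \<open>Without a Riesz representation theorem \<open>hadj\<close> is not known to produce adjoints, so
  contractivity of \<open>\<pi>\<close> is only claimed at elements whose image has one.\<close>
lemma unital_star_rep_norm_le:
  fixes \<pi> :: "'a::cstar_algebra \<Rightarrow> ('h::chilbert \<Rightarrow> 'h)"
  assumes rep: "unital_star_rep \<pi>"
    and adj: "\<And>\<xi> \<eta>. cinner (\<pi> (cstar y) \<xi>) \<eta> = cinner \<xi> (\<pi> y \<eta>)"
  shows "norm (\<pi> y \<xi>) \<le> norm y * norm \<xi>"
proof -
  have opm: "clinear_op_map \<pi>" and mult: "\<And>a b x. \<pi> (a * b) x = \<pi> a (\<pi> b x)"
    and one: "\<And>x. \<pi> 1 x = x"
    using rep unfolding unital_star_rep_def by auto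
  note BL = clinear_op_map_bounded_linear[OF opm]
  have "(onorm (\<pi> y))\<^sup>2 \<le> norm (cstar y * y)"
  proof (rule onorm_sq_le_of_bounded_below[OF BL adj])
    fix N assume "norm (cstar y * y) < N"
    then obtain g where g: "g * (N *\<^sub>R 1 - cstar y * y) = 1"
      using left_inverse_scaled_one_minus by blast
    obtain K where K: "\<forall>x. norm (\<pi> g x) \<le> norm x * K"
      using bounded_linear.bounded[OF BL] by blast
    have "x = \<pi> g (N *\<^sub>R x - \<pi> (cstar y) (\<pi> y x))" for x
      using arg_cong[OF g, of "\<lambda>u. \<pi> u x"] by (simp add: mult one clinear_op_map_simps[OF opm])
    then show "\<exists>K. \<forall>x. norm x \<le> K * norm (N *\<^sub>R x - \<pi> (cstar y) (\<pi> y x))"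
      using K by (metis mult.commute)
  qed simp
  then have "(onorm (\<pi> y))\<^sup>2 \<le> (norm y)\<^sup>2" by (simp add: cstar_identity)
  then have "onorm (\<pi> y) \<le> norm y" by (rule power2_le_imp_le) simp
  then show ?thesis
    by (rule order_trans[OF onorm[OF BL] mult_right_mono[OF _ norm_ge_zero]])
qed

section \<open>Two-parameter limits\<close>

lemma limsup_le_of_eventually_le:
  fixes f :: "nat \<Rightarrow> real" and g :: "real \<Rightarrow> real"
  assumes g: "(g \<longlongrightarrow> L) (at_right 0)"
    and ev: "\<forall>\<^sub>F \<delta> in at_right 0. \<forall>\<^sub>F n in sequentially. f n \<le> g \<delta>"
  shows "limsup (\<lambda>n. ereal (f n)) \<le> ereal L"
proof (rule ereal_le_epsilon2)
  fix \<epsilon> :: real assume "0 < \<epsilon>"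
  have "\<forall>\<^sub>F \<delta> in at_right 0. g \<delta> < L + \<epsilon> \<and> (\<forall>\<^sub>F n in sequentially. f n \<le> g \<delta>)"
    using order_tendstoD(2)[OF g, of "L + \<epsilon>"] \<open>0 < \<epsilon>\<close> ev by (simp add: eventually_conj)
  then have "\<exists>\<delta>. g \<delta> < L + \<epsilon> \<and> (\<forall>\<^sub>F n in sequentially. f n \<le> g \<delta>)"
    by (rule eventually_happens'[rotated]) simp
  then have "\<forall>\<^sub>F n in sequentially. ereal (f n) \<le> ereal (L + \<epsilon>)"
    by (auto elim: eventually_mono)
  then have "limsup (\<lambda>n. ereal (f n)) \<le> ereal (L + \<epsilon>)" by (rule Limsup_bounded)
  then show "limsup (\<lambda>n. ereal (f n)) \<le> ereal L + ereal \<epsilon>" by simp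
qed

lemma tendsto_zero_of_eventually_le:
  fixes f :: "nat \<Rightarrow> real" and g :: "real \<Rightarrow> real"
  assumes g: "(g \<longlongrightarrow> 0) (at_right 0)"
    and nonneg: "\<And>n. 0 \<le> f n"
    and ev: "\<forall>\<^sub>F \<delta> in at_right 0. \<forall>\<^sub>F n in sequentially. f n \<le> g \<delta>"
  shows "f \<longlonglongrightarrow> 0"
proof (rule tendstoI)
  fix \<epsilon> :: real assume "0 < \<epsilon>"
  have "\<forall>\<^sub>F \<delta> in at_right 0. g \<delta> < \<epsilon> \<and> (\<forall>\<^sub>F n in sequentially. f n \<le> g \<delta>)"
    using order_tendstoD(2)[OF g \<open>0 < \<epsilon>\<close>] ev by (simp add: eventually_conj)
  then have "\<exists>\<delta>. g \<delta> < \<epsilon> \<and> (\<forall>\<^sub>F n in sequentially. f n \<le> g \<delta>)"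
    by (rule eventually_happens'[rotated]) simp
  then show "\<forall>\<^sub>F n in sequentially. dist (f n) 0 < \<epsilon>"
    using nonneg by (auto elim: eventually_mono)
qed

section \<open>The characteristic sequence inside the operator system\<close>

text \<open>The error term of \<open>norm_Phi_Phi_Delta_le\<close> for \<open>\<epsilon> = \<surd>(3\<delta>)\<close>, the bound provided by
  \<open>eventually_Delta_centred_small\<close>.\<close>
definition approx_error :: "real \<Rightarrow> real" where
  "approx_error \<delta> = sqrt (3 * \<delta>) + sqrt (2 * (\<delta> + sqrt (3 * \<delta>)))"

lemma approx_error_nonneg: "0 \<le> \<delta> \<Longrightarrow> 0 \<le> approx_error \<delta>"
  by (simp add: approx_error_def)

lemma approx_error_tendsto_0: "(approx_error \<longlongrightarrow> 0) (at_right 0)"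
proof -
  have "((\<lambda>\<delta>. sqrt (3 * \<delta>) + sqrt (2 * (\<delta> + sqrt (3 * \<delta>))))
      \<longlongrightarrow> sqrt (3 * 0) + sqrt (2 * (0 + sqrt (3 * 0)))) (at_right (0::real))"
    by (intro tendsto_intros)
  then show ?thesis by (simp add: approx_error_def[abs_def])
qed

context
  fixes S :: "'a::cstar_algebra set"
    and \<pi> \<Phi> :: "'a \<Rightarrow> ('h::chilbert \<Rightarrow> 'h)"
    and \<psi> :: "'a \<Rightarrow> complex"
    and \<Delta> :: "nat \<Rightarrow> 'a"
  assumes os: "operator_system S"
    and rep: "unital_star_rep \<pi>"
    and ucp: "ucp \<Phi>"
    and agree: "\<forall>x\<in>S. \<Phi> x = \<pi> x"
    and state: "cstate \<psi>"
    and char: "characteristic_sequence \<psi> \<Delta>"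
    and Delta_in: "\<forall>n. \<Delta> n \<in> S"
begin

lemma norm_Delta [simp]: "norm (\<Delta> n) = 1"
  using char unfolding characteristic_sequence_def by blast

lemma pi_Delta: "\<pi> (\<Delta> n) = \<Phi> (\<Delta> n)"
  using agree Delta_in by simp

lemma hadj_pi_Delta: "hadj (\<pi> (\<Delta> n)) = \<Phi> (cstar (\<Delta> n))"
  using rep agree Delta_in os unfolding unital_star_rep_def operator_system_def by auto

lemma norm_Phi_Delta_le: "norm (\<Phi> (\<Delta> n) x) \<le> norm x"
  using ucp_norm_le[OF ucp, of "\<Delta> n" x] by simp

lemma cmod_psi_Delta_le_1: "cmod (\<psi> (\<Delta> m)) \<le> 1"
proof -
  have "0 \<le> Re (\<psi> (cstar (\<Delta> m - \<psi> (\<Delta> m) *\<^sub>C 1) * (\<Delta> m - \<psi> (\<Delta> m) *\<^sub>C 1)))"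
    by (rule cstate_nonneg(2)[OF state])
  then have "0 \<le> Re (\<psi> (cstar (\<Delta> m) * \<Delta> m)) - (cmod (\<psi> (\<Delta> m)))\<^sup>2"
    by (simp add: cstate_variance[OF state])
  then have "(cmod (\<psi> (\<Delta> m)))\<^sup>2 \<le> 1\<^sup>2"
    using cstate_le_norm_sq[OF state, of "\<Delta> m"] by simp
  then show ?thesis by (rule power2_le_imp_le) simp
qed

lemma eventually_compression_less:
  assumes "cmod (\<psi> c) < r"
  shows "\<forall>\<^sub>F n in sequentially. norm (cstar (\<Delta> n) * c * \<Delta> n) < r"
proof -
  have "limsup (\<lambda>n. ereal (norm (cstar (\<Delta> n) * c * \<Delta> n))) \<le> ereal (cmod (\<psi> c))"
    using char unfolding characteristic_sequence_def by blast
  also have "\<dots> < ereal r" using assms by simp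
  finally show ?thesis by (auto dest: Limsup_lessD)
qed

lemma exists_good_index:
  assumes "0 < \<delta>"
  shows "\<exists>m. 1 - \<delta> \<le> cmod (\<psi> (\<Delta> m)) \<and> norm (cstar (\<Delta> m) * c * \<Delta> m) < cmod (\<psi> c) + \<delta>"
proof -
  have "(\<lambda>m. cmod (\<psi> (\<Delta> m))) \<longlonglongrightarrow> 1"
    using tendsto_norm[of "\<lambda>m. \<psi> (\<Delta> m)" 1] char unfolding characteristic_sequence_def by simp
  then have "\<forall>\<^sub>F m in sequentially. 1 - \<delta> < cmod (\<psi> (\<Delta> m))"
    using assms by (intro order_tendstoD(1)) auto
  moreover have "\<forall>\<^sub>F m in sequentially. norm (cstar (\<Delta> m) * c * \<Delta> m) < cmod (\<psi> c) + \<delta>"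
    using assms by (intro eventually_compression_less) simp
  ultimately have "\<forall>\<^sub>F m in sequentially.
      1 - \<delta> \<le> cmod (\<psi> (\<Delta> m)) \<and> norm (cstar (\<Delta> m) * c * \<Delta> m) < cmod (\<psi> c) + \<delta>"
    by eventually_elim simp
  then show ?thesis by (rule eventually_happens'[rotated]) simp
qed

text \<open>Since \<open>\<Delta>\<^sub>m - \<psi>(\<Delta>\<^sub>m)\<close> and \<open>\<Delta>\<^sub>n\<close> lie in \<open>S\<close>, on which \<open>\<pi>\<close> and \<open>\<Phi>\<close> agree, the adjoint
  needed for contractivity of \<open>\<pi>\<close> at their product is supplied by \<open>\<Phi>\<close>.\<close>
lemma norm_Phi_Delta_centred_le:
  "norm (\<Phi> (\<Delta> m) (\<Phi> (\<Delta> n) \<xi>) - \<psi> (\<Delta> m) *\<^sub>C \<Phi> (\<Delta> n) \<xi>)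
     \<le> norm ((\<Delta> m - \<psi> (\<Delta> m) *\<^sub>C 1) * \<Delta> n) * norm \<xi>"
proof -
  define D where "D = \<Delta> m - \<psi> (\<Delta> m) *\<^sub>C 1"
  have closed: "x \<in> S \<Longrightarrow> y \<in> S \<Longrightarrow> x + c *\<^sub>C y \<in> S" "x \<in> S \<Longrightarrow> cstar x \<in> S" "1 \<in> S" for x y c
    using os unfolding operator_system_def by blast+
  have "D \<in> S" using closed(1)[of "\<Delta> m" 1 "- \<psi> (\<Delta> m)"] closed(3) Delta_in
    by (simp add: D_def scaleC_minus_left)
  then have \<pi>_D: "\<pi> D = \<Phi> D" "\<pi> (cstar D) = \<Phi> (cstar D)"
    and \<pi>_Delta: "\<pi> (\<Delta> n) = \<Phi> (\<Delta> n)" "\<pi> (cstar (\<Delta> n)) = \<Phi> (cstar (\<Delta> n))"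
    using agree closed(2) Delta_in by auto
  have mult: "\<pi> (a * b) x = \<pi> a (\<pi> b x)" for a b x
    using rep unfolding unital_star_rep_def by simp
  have "norm (\<pi> (D * \<Delta> n) \<xi>) \<le> norm (D * \<Delta> n) * norm \<xi>"
  proof (rule unital_star_rep_norm_le[OF rep])
    fix \<xi> \<eta>
    show "cinner (\<pi> (cstar (D * \<Delta> n)) \<xi>) \<eta> = cinner \<xi> (\<pi> (D * \<Delta> n) \<eta>)"
      by (simp add: cstar_mult mult \<pi>_D \<pi>_Delta ucp_adjoint[OF ucp] cstar_cstar)
  qed
  then have "norm (\<Phi> D (\<Phi> (\<Delta> n) \<xi>)) \<le> norm (D * \<Delta> n) * norm \<xi>"
    by (simp add: mult \<pi>_D \<pi>_Delta)
  then show ?thesis by (simp add: D_def ucp_simps[OF ucp])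
qed

lemma norm_Phi_Delta_shift_le:
  assumes "norm ((\<Delta> m - \<psi> (\<Delta> m) *\<^sub>C 1) * \<Delta> n) \<le> \<epsilon>"
  shows "norm (\<psi> (\<Delta> m) *\<^sub>C \<Phi> (\<Delta> n) \<xi> - \<Phi> (\<Delta> m) (\<Phi> (\<Delta> n) \<xi>)) \<le> \<epsilon> * norm \<xi>"
  using norm_Phi_Delta_centred_le[of m n \<xi>] mult_right_mono[OF assms, of "norm \<xi>"]
  by (simp add: norm_minus_commute)

lemma eventually_Delta_centred_small:
  assumes "0 < \<delta>" and "1 - \<delta> \<le> cmod (\<psi> (\<Delta> m))"
  shows "\<forall>\<^sub>F n in sequentially. norm ((\<Delta> m - \<psi> (\<Delta> m) *\<^sub>C 1) * \<Delta> n) \<le> sqrt (3 * \<delta>)"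
proof -
  define D where "D = \<Delta> m - \<psi> (\<Delta> m) *\<^sub>C 1"
  define P where "P = cmod (\<psi> (\<Delta> m))"
  have "\<psi> (cstar D * D) = \<psi> (cstar (\<Delta> m) * \<Delta> m) - complex_of_real (P\<^sup>2)"
    unfolding D_def P_def by (rule cstate_variance[OF state])
  then have "cmod (\<psi> (cstar D * D)) = Re (\<psi> (cstar (\<Delta> m) * \<Delta> m)) - P\<^sup>2"
    using cstate_nonneg[OF state, of D] by (simp add: cmod_eq_Re)
  also have "\<dots> \<le> (1 - P) * (1 + P)"
    using cstate_le_norm_sq[OF state, of "\<Delta> m"] by (simp add: power2_eq_square algebra_simps)
  also have "\<dots> \<le> \<delta> * 2"
    using assms cmod_psi_Delta_le_1[of m] by (intro mult_mono) (auto simp: P_def)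
  finally have "\<forall>\<^sub>F n in sequentially. norm (cstar (\<Delta> n) * (cstar D * D) * \<Delta> n) < 3 * \<delta>"
    using assms(1) by (intro eventually_compression_less) simp
  then show ?thesis
    by (rule eventually_mono) (simp add: norm_mult_eq_sqrt_compression[of D] D_def[symmetric])
qed

lemma sqrt_schwarz_defect_Delta_le:
  assumes "1 - \<delta> \<le> cmod (\<psi> (\<Delta> m))" and "norm ((\<Delta> m - \<psi> (\<Delta> m) *\<^sub>C 1) * \<Delta> n) \<le> \<epsilon>"
  shows "sqrt (schwarz_defect \<Phi> (\<Delta> m) (\<Phi> (\<Delta> n) \<xi>)) \<le> sqrt (2 * (\<delta> + \<epsilon>)) * norm \<xi>"
proof -
  define w where "w = \<Phi> (\<Delta> n) \<xi>"
  define v where "v = \<Phi> (\<Delta> m) w"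
  define P where "P = cmod (\<psi> (\<Delta> m))"
  define X where "X = norm \<xi>"
  have wX: "norm w \<le> X" and vw: "norm v \<le> norm w"
    by (simp_all add: w_def v_def X_def norm_Phi_Delta_le)
  have "norm (v - \<psi> (\<Delta> m) *\<^sub>C w) \<le> \<epsilon> * X"
    using norm_Phi_Delta_shift_le[OF assms(2), of \<xi>]
    by (simp add: v_def w_def X_def norm_minus_commute)
  then have "P * norm w - \<epsilon> * X \<le> norm v"
    using norm_triangle_ineq3[of v "\<psi> (\<Delta> m) *\<^sub>C w"] by (simp add: P_def norm_scaleC)
  moreover have "(1 - P) * norm w \<le> (1 - P) * X"
    using wX cmod_psi_Delta_le_1[of m] by (intro mult_left_mono) (simp_all add: P_def)
  moreover have "(1 - P) * X \<le> \<delta> * X"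
    using assms(1) by (intro mult_right_mono) (simp_all add: P_def X_def)
  ultimately have "norm w - norm v \<le> (\<delta> + \<epsilon>) * X"
    by (simp add: algebra_simps)
  moreover have "norm w + norm v \<le> 2 * X" using wX vw by simp
  ultimately have "(norm w - norm v) * (norm w + norm v) \<le> ((\<delta> + \<epsilon>) * X) * (2 * X)"
    using vw by (intro mult_mono) auto
  moreover have "schwarz_defect \<Phi> (\<Delta> m) w \<le> (norm w)\<^sup>2 - (norm v)\<^sup>2"
    using ucp_cinner_le[OF ucp, of w "\<Delta> m"] by (simp add: schwarz_defect_def v_def)
  ultimately have "schwarz_defect \<Phi> (\<Delta> m) w \<le> 2 * (\<delta> + \<epsilon>) * X\<^sup>2"
    by (simp add: power2_eq_square algebra_simps)
  then show ?thesis
    by (intro le_sqrt_mult_of_sq_le)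
      (simp_all add: w_def X_def mult.commute schwarz_defect_nonneg[OF ucp])
qed

lemma norm_Phi_Phi_Delta_le:
  assumes P: "1 - \<delta> \<le> cmod (\<psi> (\<Delta> m))"
    and small: "norm ((\<Delta> m - \<psi> (\<Delta> m) *\<^sub>C 1) * \<Delta> n) \<le> \<epsilon>"
  shows "(1 - \<delta>) * norm (\<Phi> a (\<Phi> (\<Delta> n) \<xi>))
           \<le> (norm a * (\<epsilon> + sqrt (2 * (\<delta> + \<epsilon>))) + norm (a * \<Delta> m)) * norm \<xi>"
proof -
  define p where "p = \<psi> (\<Delta> m)"
  define w where "w = \<Phi> (\<Delta> n) \<xi>"
  define v where "v = \<Phi> (\<Delta> m) w"
  define X where "X = norm \<xi>"
  have wX: "norm w \<le> X" by (simp add: w_def X_def norm_Phi_Delta_le)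
  have shift: "norm (p *\<^sub>C w - v) \<le> \<epsilon> * X"
    using norm_Phi_Delta_shift_le[OF small, of \<xi>] by (simp add: p_def v_def w_def X_def)
  have "(1 - \<delta>) * norm (\<Phi> a w) \<le> cmod p * norm (\<Phi> a w)"
    using P by (simp add: p_def mult_right_mono)
  also have "\<dots> = norm (\<Phi> a (p *\<^sub>C w - v) + (\<Phi> a v - \<Phi> (a * \<Delta> m) w) + \<Phi> (a * \<Delta> m) w)"
    by (simp add: ucp_simps[OF ucp] norm_scaleC algebra_simps)
  also have "\<dots> \<le> norm (\<Phi> a (p *\<^sub>C w - v)) + norm (\<Phi> a v - \<Phi> (a * \<Delta> m) w) + norm (\<Phi> (a * \<Delta> m) w)"
    by (rule order.trans[OF norm_triangle_ineq add_right_mono[OF norm_triangle_ineq]])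
  also have "\<dots> \<le> norm a * (\<epsilon> * X) + norm a * (sqrt (2 * (\<delta> + \<epsilon>)) * X) + norm (a * \<Delta> m) * X"
  proof (intro add_mono)
    show "norm (\<Phi> a (p *\<^sub>C w - v)) \<le> norm a * (\<epsilon> * X)"
      by (rule order_trans[OF ucp_norm_le[OF ucp] mult_left_mono[OF shift norm_ge_zero]])
    show "norm (\<Phi> a v - \<Phi> (a * \<Delta> m) w) \<le> norm a * (sqrt (2 * (\<delta> + \<epsilon>)) * X)"
      unfolding v_def w_def X_def
      by (rule order_trans[OF ucp_mult_defect[OF ucp]
            mult_left_mono[OF sqrt_schwarz_defect_Delta_le[OF P small] norm_ge_zero]])
    show "norm (\<Phi> (a * \<Delta> m) w) \<le> norm (a * \<Delta> m) * X"
      by (rule order_trans[OF ucp_norm_le[OF ucp] mult_left_mono[OF wX norm_ge_zero]])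
  qed
  finally show ?thesis by (simp add: w_def X_def algebra_simps)
qed

lemma cinner_scaleC_approx_Phi_Delta:
  assumes small: "norm ((\<Delta> m - \<psi> (\<Delta> m) *\<^sub>C 1) * \<Delta> n) \<le> \<epsilon>"
  shows "cmod (cinner (\<psi> (\<Delta> m) *\<^sub>C \<Phi> (\<Delta> n) \<eta>) (\<Phi> a (\<psi> (\<Delta> m) *\<^sub>C \<Phi> (\<Delta> n) \<xi>))
          - cinner (\<Phi> (\<Delta> m) (\<Phi> (\<Delta> n) \<eta>)) (\<Phi> a (\<Phi> (\<Delta> m) (\<Phi> (\<Delta> n) \<xi>))))
         \<le> 2 * norm a * \<epsilon> * norm \<xi> * norm \<eta>"
proof -
  define p where "p = \<psi> (\<Delta> m)"
  define w where "w = \<Phi> (\<Delta> n) \<xi>"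
  define v where "v = \<Phi> (\<Delta> m) w"
  define w' where "w' = \<Phi> (\<Delta> n) \<eta>"
  define v' where "v' = \<Phi> (\<Delta> m) w'"
  note shift = norm_Phi_Delta_shift_le[OF small, folded p_def]
  have "cmod (cinner (p *\<^sub>C w' - v') (\<Phi> a (p *\<^sub>C w))) \<le> (\<epsilon> * norm \<eta>) * (norm a * norm \<xi>)"
  proof (rule order_trans[OF cmod_cinner_le mult_mono])
    have "norm (\<Phi> a (p *\<^sub>C w)) \<le> norm a * (cmod p * norm w)"
      using ucp_norm_le[OF ucp, of a "p *\<^sub>C w"] by (simp add: norm_scaleC)
    also have "\<dots> \<le> norm a * (1 * norm \<xi>)"
      using cmod_psi_Delta_le_1[of m] norm_Phi_Delta_le[of n \<xi>]
      by (intro mult_left_mono mult_mono) (simp_all add: p_def w_def)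
    finally show "norm (\<Phi> a (p *\<^sub>C w)) \<le> norm a * norm \<xi>" by simp
  qed (use shift[of \<eta>] order_trans[OF norm_ge_zero small] in \<open>simp_all add: w'_def v'_def\<close>)
  moreover have "cmod (cinner v' (\<Phi> a (p *\<^sub>C w - v))) \<le> norm \<eta> * (norm a * (\<epsilon> * norm \<xi>))"
  proof (rule order_trans[OF cmod_cinner_le mult_mono])
    show "norm v' \<le> norm \<eta>"
      using norm_Phi_Delta_le order_trans unfolding v'_def w'_def by blast
    show "norm (\<Phi> a (p *\<^sub>C w - v)) \<le> norm a * (\<epsilon> * norm \<xi>)"
      by (rule order_trans[OF ucp_norm_le[OF ucp] mult_left_mono])
        (use shift[of \<xi>] in \<open>simp_all add: w_def v_def\<close>)
  qed simp_all
  moreover have "cinner (p *\<^sub>C w') (\<Phi> a (p *\<^sub>C w)) - cinner v' (\<Phi> a v) =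
      cinner (p *\<^sub>C w' - v') (\<Phi> a (p *\<^sub>C w)) + cinner v' (\<Phi> a (p *\<^sub>C w - v))"
    by (simp add: cinner_diff_left cinner_diff_right ucp_simps[OF ucp])
  ultimately show ?thesis
    unfolding p_def[symmetric] w_def[symmetric] v_def[symmetric] w'_def[symmetric] v'_def[symmetric]
    using norm_triangle_ineq[of "cinner (p *\<^sub>C w' - v') (\<Phi> a (p *\<^sub>C w))"
        "cinner v' (\<Phi> a (p *\<^sub>C w - v))"]
    by (simp add: algebra_simps)
qed

lemma compression_defect_Delta_le:
  assumes P: "1 - \<delta> \<le> cmod (\<psi> (\<Delta> m))"
    and small: "norm ((\<Delta> m - \<psi> (\<Delta> m) *\<^sub>C 1) * \<Delta> n) \<le> \<epsilon>"
  shows "cmod (cinner (\<Phi> (\<Delta> m) (\<Phi> (\<Delta> n) \<eta>)) (\<Phi> a (\<Phi> (\<Delta> m) (\<Phi> (\<Delta> n) \<xi>)))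
                - cinner (\<Phi> (\<Delta> n) \<eta>) (\<Phi> (cstar (\<Delta> m) * a * \<Delta> m) (\<Phi> (\<Delta> n) \<xi>)))
         \<le> 2 * norm a * sqrt (2 * (\<delta> + \<epsilon>)) * norm \<xi> * norm \<eta>"
proof -
  define w where "w = \<Phi> (\<Delta> n) \<xi>"
  define w' where "w' = \<Phi> (\<Delta> n) \<eta>"
  define s where "s = sqrt (2 * (\<delta> + \<epsilon>))"
  have d: "sqrt (schwarz_defect \<Phi> (\<Delta> m) (\<Phi> (\<Delta> n) x)) \<le> s * norm x" for x
    using sqrt_schwarz_defect_Delta_le[OF P small] by (simp add: s_def)
  have "norm w' * sqrt (schwarz_defect \<Phi> (\<Delta> m) w) \<le> norm \<eta> * (s * norm \<xi>)"
    "norm w * sqrt (schwarz_defect \<Phi> (\<Delta> m) w') \<le> norm \<xi> * (s * norm \<eta>)"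
    using d[of \<xi>] d[of \<eta>]
    by (intro mult_mono; simp add: w_def w'_def norm_Phi_Delta_le schwarz_defect_nonneg[OF ucp])+
  then have "norm a * norm (\<Delta> m) * (norm w' * sqrt (schwarz_defect \<Phi> (\<Delta> m) w)
        + norm w * sqrt (schwarz_defect \<Phi> (\<Delta> m) w'))
      \<le> norm a * (norm \<eta> * (s * norm \<xi>) + norm \<xi> * (s * norm \<eta>))"
    unfolding norm_Delta mult_1_right by (intro mult_left_mono add_mono) simp_all
  with ucp_compression_defect[OF ucp, of "\<Delta> m" w' a w] show ?thesis
    by (simp add: w_def w'_def s_def algebra_simps)
qed

lemma cmod_cinner_Phi_Phi_Delta_le:
  assumes P: "1 - \<delta> \<le> cmod (\<psi> (\<Delta> m))" and "\<delta> \<le> 1"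
    and small: "norm ((\<Delta> m - \<psi> (\<Delta> m) *\<^sub>C 1) * \<Delta> n) \<le> \<epsilon>"
  shows "(1 - \<delta>)\<^sup>2 * cmod (cinner (\<Phi> (\<Delta> n) \<eta>) (\<Phi> a (\<Phi> (\<Delta> n) \<xi>)))
           \<le> (2 * norm a * (\<epsilon> + sqrt (2 * (\<delta> + \<epsilon>))) + norm (cstar (\<Delta> m) * a * \<Delta> m))
              * norm \<xi> * norm \<eta>"
proof -
  define p where "p = \<psi> (\<Delta> m)"
  define w where "w = \<Phi> (\<Delta> n) \<xi>"
  define w' where "w' = \<Phi> (\<Delta> n) \<eta>"
  define c where "c = cstar (\<Delta> m) * a * \<Delta> m"
  have "(1 - \<delta>)\<^sup>2 * cmod (cinner w' (\<Phi> a w)) \<le> (cmod p)\<^sup>2 * cmod (cinner w' (\<Phi> a w))"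
    using P \<open>\<delta> \<le> 1\<close> by (intro mult_right_mono power_mono) (simp_all add: p_def)
  also have "\<dots> = cmod (cinner (p *\<^sub>C w') (\<Phi> a (p *\<^sub>C w)))"
    by (simp add: ucp_simps[OF ucp] cinner_scaleC_left cinner_scaleC_right norm_mult power2_eq_square)
  also have "\<dots> \<le> cmod (cinner (p *\<^sub>C w') (\<Phi> a (p *\<^sub>C w))
                        - cinner (\<Phi> (\<Delta> m) w') (\<Phi> a (\<Phi> (\<Delta> m) w)))
               + cmod (cinner (\<Phi> (\<Delta> m) w') (\<Phi> a (\<Phi> (\<Delta> m) w)) - cinner w' (\<Phi> c w))
               + cmod (cinner w' (\<Phi> c w))"
    by (rule norm_le_diff_diff_add)
  also have "\<dots> \<le> 2 * norm a * \<epsilon> * norm \<xi> * norm \<eta>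
                 + 2 * norm a * sqrt (2 * (\<delta> + \<epsilon>)) * norm \<xi> * norm \<eta>
                 + norm \<eta> * (norm c * norm \<xi>)"
  proof (intro add_mono)
    show "cmod (cinner w' (\<Phi> c w)) \<le> norm \<eta> * (norm c * norm \<xi>)"
      by (rule order_trans[OF cmod_cinner_le mult_mono[OF _ order_trans[OF ucp_norm_le[OF ucp]
            mult_left_mono]]]) (simp_all add: w_def w'_def norm_Phi_Delta_le)
  qed (unfold p_def w_def w'_def c_def,
       fact cinner_scaleC_approx_Phi_Delta[OF small], fact compression_defect_Delta_le[OF P small])
  finally show ?thesis
    by (simp add: w_def w'_def c_def algebra_simps)
qed

lemma eventually_onorm_Phi_pi_le:
  assumes "0 < \<delta>" and "\<delta> < 1"
  shows "\<forall>\<^sub>F n in sequentially. onorm (\<Phi> a \<circ> \<pi> (\<Delta> n))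
           \<le> (norm a * approx_error \<delta> + sqrt (Re (\<psi> (cstar a * a)) + \<delta>)) / (1 - \<delta>)"
proof -
  obtain m where P: "1 - \<delta> \<le> cmod (\<psi> (\<Delta> m))"
    and B: "norm (cstar (\<Delta> m) * (cstar a * a) * \<Delta> m) < cmod (\<psi> (cstar a * a)) + \<delta>"
    using exists_good_index[OF assms(1)] by blast
  have "cmod (\<psi> (cstar a * a)) = Re (\<psi> (cstar a * a))"
    using cstate_nonneg[OF state, of a] by (simp add: cmod_eq_Re)
  then have aD: "norm (a * \<Delta> m) \<le> sqrt (Re (\<psi> (cstar a * a)) + \<delta>)"
    using B by (simp add: norm_mult_eq_sqrt_compression[of a])
  define K where "K = (norm a * approx_error \<delta> + sqrt (Re (\<psi> (cstar a * a)) + \<delta>)) / (1 - \<delta>)"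
  show ?thesis
    using eventually_Delta_centred_small[OF assms(1) P]
  proof eventually_elim
    case (elim n)
    have "norm (\<Phi> a (\<Phi> (\<Delta> n) \<xi>)) \<le> K * norm \<xi>" for \<xi>
    proof -
      have "(1 - \<delta>) * norm (\<Phi> a (\<Phi> (\<Delta> n) \<xi>))
          \<le> (norm a * approx_error \<delta> + norm (a * \<Delta> m)) * norm \<xi>"
        using norm_Phi_Phi_Delta_le[OF P elim, of a \<xi>] by (simp add: approx_error_def)
      also have "\<dots> \<le> (1 - \<delta>) * K * norm \<xi>"
        using aD assms(2) by (intro mult_right_mono) (simp_all add: K_def)
      finally show ?thesis using assms(2) by (simp add: mult.assoc)
    qed
    moreover have "0 \<le> K"
      using assms cstate_nonneg(2)[OF state, of a] by (simp add: K_def approx_error_nonneg)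
    ultimately show ?case by (intro onorm_bound) (simp_all add: K_def pi_Delta)
  qed
qed

lemma eventually_onorm_compression_le:
  assumes "0 < \<delta>" and "\<delta> < 1" and "\<psi> a = 0"
  shows "\<forall>\<^sub>F n in sequentially. onorm (hadj (\<pi> (\<Delta> n)) \<circ> \<Phi> a \<circ> \<pi> (\<Delta> n))
           \<le> (2 * norm a * approx_error \<delta> + \<delta>) / (1 - \<delta>)\<^sup>2"
proof -
  obtain m where P: "1 - \<delta> \<le> cmod (\<psi> (\<Delta> m))"
    and B: "norm (cstar (\<Delta> m) * a * \<Delta> m) < cmod (\<psi> a) + \<delta>"
    using exists_good_index[OF assms(1)] by blast
  define K where "K = (2 * norm a * approx_error \<delta> + \<delta>) / (1 - \<delta>)\<^sup>2"
  have "0 \<le> K" using assms by (simp add: K_def approx_error_nonneg)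
  show ?thesis
    using eventually_Delta_centred_small[OF assms(1) P]
  proof eventually_elim
    case (elim n)
    have "norm (\<Phi> (cstar (\<Delta> n)) (\<Phi> a (\<Phi> (\<Delta> n) \<xi>))) \<le> K * norm \<xi>" for \<xi>
    proof (rule norm_le_of_cmod_cinner_le)
      fix \<eta>
      have "(1 - \<delta>)\<^sup>2 * cmod (cinner (\<Phi> (\<Delta> n) \<eta>) (\<Phi> a (\<Phi> (\<Delta> n) \<xi>)))
          \<le> (2 * norm a * approx_error \<delta> + norm (cstar (\<Delta> m) * a * \<Delta> m)) * norm \<xi> * norm \<eta>"
        using cmod_cinner_Phi_Phi_Delta_le[OF P _ elim, of \<eta> a \<xi>] assms(2) by (simp add: approx_error_def)
      also have "\<dots> \<le> (2 * norm a * approx_error \<delta> + \<delta>) * norm \<xi> * norm \<eta>"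
        using B assms by (intro mult_right_mono) simp_all
      also have "\<dots> = (1 - \<delta>)\<^sup>2 * (K * norm \<xi> * norm \<eta>)"
        using assms(2) by (simp add: K_def)
      finally show "cmod (cinner \<eta> (\<Phi> (cstar (\<Delta> n)) (\<Phi> a (\<Phi> (\<Delta> n) \<xi>)))) \<le> K * norm \<xi> * norm \<eta>"
        using assms(2) by (simp add: ucp_adjoint[OF ucp, symmetric] cstar_cstar)
    qed (simp add: \<open>0 \<le> K\<close>)
    then show ?case
      using \<open>0 \<le> K\<close> unfolding hadj_pi_Delta unfolding pi_Delta
      by (intro onorm_bound) (simp_all add: K_def)
  qed
qed

lemma limsup_onorm_Phi_pi_le:
  "limsup (\<lambda>n. ereal (onorm (\<Phi> a \<circ> \<pi> (\<Delta> n)))) \<le> ereal (sqrt (Re (\<psi> (cstar a * a))))"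
proof (rule limsup_le_of_eventually_le)
  show "((\<lambda>\<delta>. (norm a * approx_error \<delta> + sqrt (Re (\<psi> (cstar a * a)) + \<delta>)) / (1 - \<delta>))
      \<longlongrightarrow> sqrt (Re (\<psi> (cstar a * a)))) (at_right 0)"
  proof -
    have "((\<lambda>\<delta>. (norm a * approx_error \<delta> + sqrt (Re (\<psi> (cstar a * a)) + \<delta>)) / (1 - \<delta>))
        \<longlongrightarrow> (norm a * 0 + sqrt (Re (\<psi> (cstar a * a)) + 0)) / (1 - 0)) (at_right 0)"
      by (intro tendsto_intros approx_error_tendsto_0) simp
    then show ?thesis by simp
  qed
  show "\<forall>\<^sub>F \<delta> in at_right 0. \<forall>\<^sub>F n in sequentially. onorm (\<Phi> a \<circ> \<pi> (\<Delta> n))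
      \<le> (norm a * approx_error \<delta> + sqrt (Re (\<psi> (cstar a * a)) + \<delta>)) / (1 - \<delta>)"
    by (rule eventually_at_rightI[of 0 1]) (simp_all add: eventually_onorm_Phi_pi_le)
qed

lemma onorm_compression_tendsto_0:
  assumes "\<psi> a = 0"
  shows "(\<lambda>n. onorm (hadj (\<pi> (\<Delta> n)) \<circ> \<Phi> a \<circ> \<pi> (\<Delta> n))) \<longlonglongrightarrow> 0"
proof (rule tendsto_zero_of_eventually_le)
  show "((\<lambda>\<delta>. (2 * norm a * approx_error \<delta> + \<delta>) / (1 - \<delta>)\<^sup>2) \<longlongrightarrow> 0) (at_right 0)"
  proof -
    have "((\<lambda>\<delta>. (2 * norm a * approx_error \<delta> + \<delta>) / (1 - \<delta>)\<^sup>2)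
        \<longlongrightarrow> (2 * norm a * 0 + 0) / (1 - 0)\<^sup>2) (at_right 0)"
      by (intro tendsto_intros approx_error_tendsto_0) simp
    then show ?thesis by simp
  qed
  show "0 \<le> onorm (hadj (\<pi> (\<Delta> n)) \<circ> \<Phi> a \<circ> \<pi> (\<Delta> n))" for n
  proof -
    have "bounded_linear (\<Phi> (cstar (\<Delta> n)) \<circ> \<Phi> a \<circ> \<Phi> (\<Delta> n))"
      using clinear_op_map_bounded_linear[OF ucp_clinear_op_map[OF ucp]]
      unfolding o_def by (metis bounded_linear_compose)
    then show ?thesis unfolding hadj_pi_Delta unfolding pi_Delta by (rule onorm_pos_le)
  qed
  show "\<forall>\<^sub>F \<delta> in at_right 0. \<forall>\<^sub>F n in sequentially. onorm (hadj (\<pi> (\<Delta> n)) \<circ> \<Phi> a \<circ> \<pi> (\<Delta> n))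
      \<le> (2 * norm a * approx_error \<delta> + \<delta>) / (1 - \<delta>)\<^sup>2"
    by (rule eventually_at_rightI[of 0 1]) (simp_all add: eventually_onorm_compression_le assms)
qed

end

theorem lemma5p1:
  fixes S :: "'a::cstar_algebra set"
    and \<pi> \<Phi> :: "'a \<Rightarrow> ('h::chilbert \<Rightarrow> 'h)"
    and \<psi> :: "'a \<Rightarrow> complex"
    and \<Delta> :: "nat \<Rightarrow> 'a"
  assumes "operator_system S"
    and "unital_star_rep \<pi>"
    and "ucp \<Phi>"
    and "\<forall>x\<in>S. \<Phi> x = \<pi> x"
    and "cstate \<psi>"
    and "characteristic_sequence \<psi> \<Delta>"
    and "\<forall>n. \<Delta> n \<in> S"
  shows "(\<forall>a. limsup (\<lambda>n. ereal (onorm (\<Phi> a \<circ> \<pi> (\<Delta> n))))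
              \<le> ereal (sqrt (Re (\<psi> (cstar a * a))))) \<and>
         (\<forall>a. cstar a = a \<and> \<psi> a = 0 \<longrightarrow>
           (\<lambda>n. onorm (hadj (\<pi> (\<Delta> n)) \<circ> \<Phi> a \<circ> \<pi> (\<Delta> n))) \<longlonglongrightarrow> 0)"
  using limsup_onorm_Phi_pi_le[OF assms] onorm_compression_tendsto_0[OF assms] by blast

end
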